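(* If two ordered forests $\mathcal F,\mathcal F'$ have the same underlying unlabelled rooted forest, then the commutative images $\phi(R_{\mathcal F})$ and $\phi(R_{\mathcal F'})$ (with $\phi:a_{ij}\mapsto x_{ij}$ applied to the realization) are equal. Writing $R^{\overline{\mathcal F}}$ for this common image, where $\overline{\mathcal F}$ is the underlying rooted forest, the elements $R^{\overline{\mathcal F}}$, $\overline{\mathcal F}$ ranging over all rooted forests, form a basis of the (realized) Connes–Kreimer Hopf algebra.
   Context: An ordered forest on $n$ vertices is a rooted forest with vertex set $[n]$ (labels unrelated to the structure); its edge set $E(\mathcal F)$ consists of the pairs $(l,p(l))$, $p$ the parent map. $\mathcal G\le\mathcal F$ iff $E(\mathcal F)\subseteq E(\mathcal G)$ (both on $[n]$). First realization: $A=\{a_{ij}:0\le i<j\}$ with $a_{ij}\prec a_{kl}$ iff $j=k$; $S^{\mathcal F}$ is the sum of words $w_1\cdots w_n$ over $A$ with $w_k\prec w_l$ whenever $k$ is the parent of $l$. $R_{\mathcal F}=\sum_{\mathcal G\le\mathcal F}(-1)^{|E(\mathcal F)|-|E(\mathcal G)|}S^{\mathcal G}$. $\phi$ sends $a_{ij}$ to commuting indeterminates $x_{ij}$; $\phi(S^{\mathcal F})$ depends only on the underlying rooted forest, and the span of the $\phi(S^{\mathcal F})$ is a realization of the Connes–Kreimer Hopf algebra, in which $\phi(S^{\mathcal F})$ for distinct underlying rooted forests are linearly independent. *)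

theory Defs
  imports Main "HOL-Library.Multiset"
begin

text \<open>An ordered forest on n vertices: vertex set {1..n}, parent map p (None = root).\<close>

definition forest_edges :: "(nat \<Rightarrow> nat option) \<Rightarrow> (nat \<times> nat) set" where
  "forest_edges p = {(l, k). p l = Some k}"

definition ordered_forest :: "nat \<Rightarrow> (nat \<Rightarrow> nat option) \<Rightarrow> bool" where
  "ordered_forest n p \<longleftrightarrow>
     (\<forall>l k. p l = Some k \<longrightarrow> l \<in> {1..n} \<and> k \<in> {1..n}) \<and> acyclic (forest_edges p)"

definition same_underlying :: "nat \<Rightarrow> (nat \<Rightarrow> nat option) \<Rightarrow> (nat \<Rightarrow> nat option) \<Rightarrow> bool" where
  "same_underlying n p p' \<longleftrightarrow>
     (\<exists>\<sigma>. bij_betw \<sigma> {1..n} {1..n} \<and> (\<forall>l\<in>{1..n}. p' (\<sigma> l) = map_option \<sigma> (p l)))"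

text \<open>Letters a_ij are pairs (i,j) with i < j; a_ij precedes a_kl iff j = k.\<close>
definition letter_prec :: "nat \<times> nat \<Rightarrow> nat \<times> nat \<Rightarrow> bool" where
  "letter_prec a b \<longleftrightarrow> snd a = fst b"

text \<open>S^F as a formal series: coefficient of the word w (positions 1..n are w!0 .. w!(n-1)).\<close>
definition S_series :: "nat \<Rightarrow> (nat \<Rightarrow> nat option) \<Rightarrow> (nat \<times> nat) list \<Rightarrow> 'k::comm_ring_1" where
  "S_series n p w =
     (if length w = n \<and> (\<forall>a\<in>set w. fst a < snd a) \<and>
         (\<forall>l k. p l = Some k \<longrightarrow> letter_prec (w ! (k - 1)) (w ! (l - 1)))
      then 1 else 0)"

definition R_series :: "nat \<Rightarrow> (nat \<Rightarrow> nat option) \<Rightarrow> (nat \<times> nat) list \<Rightarrow> 'k::comm_ring_1" where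
  "R_series n p w =
     (\<Sum>q\<in>{q. ordered_forest n q \<and> forest_edges p \<subseteq> forest_edges q}.
        (-1) ^ card (forest_edges q - forest_edges p) * S_series n q w)"

text \<open>phi: commutative image; a monomial in the x_ij is a multiset of pairs.\<close>
definition phi :: "((nat \<times> nat) list \<Rightarrow> 'k::comm_ring_1) \<Rightarrow> (nat \<times> nat) multiset \<Rightarrow> 'k" where
  "phi X m = (\<Sum>w\<in>{w. mset w = m}. X w)"

definition fspan :: "('a \<Rightarrow> 'k::comm_ring_1) set \<Rightarrow> ('a \<Rightarrow> 'k) set" where
  "fspan B = {(\<lambda>x. \<Sum>g\<in>t. r g * g x) | t r. finite t \<and> t \<subseteq> B}"

end

theory Submission
  imports Defs "HOL-Combinatorics.Permutations"
begin

(* An ordered forest on [n] is identified with its set of edges (child, parent); the series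
   R_F is the Moebius transform of S_F over the forests with more edges.

   (1) Isomorphic forests p, p' = relabel sigma p have equal commutative images of R:
       reading the letters of a word in the order given by sigma turns the constraints of p
       into those of p', so R is invariant under simultaneous relabelling of forest and word
       positions, while phi sums over all rearrangements of a word.
   (2) The R_F and S_F span the same space: R is an integer combination of S by definition
       and, by Moebius inversion on the Boolean lattices of edge sets, S is a sum of R's.
   (3) Linear independence: every forest p has a canonical word whose letters are composable
       exactly along the edges of p.  On rearrangements of this word, phi(R_G) vanishes unless
       G is isomorphic to p, and phi(R_p) is a positive count; so the matrix of values is
       diagonal with nonzero diagonal in characteristic zero. *)

lemma forest_edges_iff [simp]: "(l, k) \<in> forest_edges p \<longleftrightarrow> p l = Some k"
  by (simp add: forest_edges_def)

lemma forest_edges_inj: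
  assumes "forest_edges p = forest_edges q"
  shows "p = q"
proof
  fix l
  have "p l = Some k \<longleftrightarrow> q l = Some k" for k
    using assms by (metis forest_edges_iff)
  then show "p l = q l" by (metis not_None_eq)
qed

lemma forest_edges_subset:
  assumes "ordered_forest n q"
  shows "forest_edges q \<subseteq> {1..n} \<times> {1..n}"
  using assms by (auto simp: ordered_forest_def forest_edges_def)

lemma ordered_forest_outside:
  assumes "ordered_forest n q" "l \<notin> {1..n}"
  shows "q l = None"
  using assms by (cases "q l") (auto simp: ordered_forest_def)

lemma finite_forest_edges:
  assumes "ordered_forest n q"
  shows "finite (forest_edges q)"
  using forest_edges_subset[OF assms] finite_subset by blast

lemma finite_ordered_forests: "finite {q. ordered_forest n q \<and> P q}"
proof (rule inj_on_finite)
  show "inj_on forest_edges {q. ordered_forest n q \<and> P q}"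
    by (auto intro: inj_onI forest_edges_inj)
  show "forest_edges ` {q. ordered_forest n q \<and> P q} \<subseteq> Pow ({1..n} \<times> {1..n})"
    using forest_edges_subset by blast
qed simp

lemma subforest_exists:
  assumes "ordered_forest n b" "T \<subseteq> forest_edges b"
  shows "\<exists>h. ordered_forest n h \<and> forest_edges h = T"
proof -
  define h where "h l = (if l \<in> Domain T then b l else None)" for l
  have "(l, k) \<in> forest_edges h \<longleftrightarrow> (l, k) \<in> T" for l k
  proof
    assume "(l, k) \<in> T"
    then show "(l, k) \<in> forest_edges h"
      using assms(2) by (auto simp: h_def)
  next
    assume "(l, k) \<in> forest_edges h"
    then obtain k' where "(l, k') \<in> T" "b l = Some k"
      by (auto simp: h_def split: if_splits)
    then show "(l, k) \<in> T"
      using assms(2) by auto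
  qed
  then have edges: "forest_edges h = T" by auto
  have "h l = Some k \<Longrightarrow> b l = Some k" for l k
    by (simp add: h_def split: if_splits)
  then show ?thesis
    using assms edges unfolding ordered_forest_def by (blast intro: acyclic_subset)
qed

lemma sum_forest_interval:
  assumes "ordered_forest n b"
  shows "(\<Sum>h | ordered_forest n h \<and> A \<subseteq> forest_edges h \<and> forest_edges h \<subseteq> forest_edges b. f (forest_edges h))
       = (\<Sum>T | A \<subseteq> T \<and> T \<subseteq> forest_edges b. f T)"
proof -
  let ?H = "{h. ordered_forest n h \<and> A \<subseteq> forest_edges h \<and> forest_edges h \<subseteq> forest_edges b}"
  have inj: "inj_on forest_edges ?H"
    by (auto intro: inj_onI forest_edges_inj)
  have "{T. A \<subseteq> T \<and> T \<subseteq> forest_edges b} \<subseteq> forest_edges ` ?H"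
  proof
    fix T assume T: "T \<in> {T. A \<subseteq> T \<and> T \<subseteq> forest_edges b}"
    then obtain h where "ordered_forest n h" "forest_edges h = T"
      using subforest_exists[OF assms] by blast
    with T show "T \<in> forest_edges ` ?H" by blast
  qed
  then have "forest_edges ` ?H = {T. A \<subseteq> T \<and> T \<subseteq> forest_edges b}" by blast
  then show ?thesis
    using sum.reindex[OF inj, of f] by simp
qed

(* The Moebius function of a Boolean lattice: the alternating sum over an interval [A, B]
   vanishes unless the interval is a single point.  The library provides the parity count. *)
lemma alternating_sum_interval:
  assumes "finite B" "A \<subseteq> B"
  shows "(\<Sum>T | A \<subseteq> T \<and> T \<subseteq> B. (-1::'a::comm_ring_1) ^ card T) = (if A = B then (-1) ^ card A else 0)"
proof (cases "A = B")
  case True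
  then have "{T. A \<subseteq> T \<and> T \<subseteq> B} = {A}" by auto
  then show ?thesis using True by simp
next
  case False
  let ?I = "{T. A \<subseteq> T \<and> T \<subseteq> B}"
  have "finite ?I"
    using assms(1) by (auto intro: finite_subset[of _ "Pow B"])
  moreover have "card {T \<in> ?I. even (card T)} = card {T \<in> ?I. odd (card T)}"
  proof -
    have "card {T. T \<subseteq> B \<and> A \<subseteq> T \<and> even (card T)} = card {T. T \<subseteq> B \<and> A \<subseteq> T \<and> odd (card T)}"
      using False assms by (intro card_subsupersets_even_odd) auto
    moreover have "{T \<in> ?I. even (card T)} = {T. T \<subseteq> B \<and> A \<subseteq> T \<and> even (card T)}"
      and "{T \<in> ?I. odd (card T)} = {T. T \<subseteq> B \<and> A \<subseteq> T \<and> odd (card T)}"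
      by auto
    ultimately show ?thesis by metis
  qed
  ultimately show ?thesis
    using False by (simp add: sum_alternating_cancels)
qed

lemma neg_one_power_card_diff:
  assumes "finite B" "A \<subseteq> B"
  shows "(-1::'a::comm_ring_1) ^ card (B - A) = (-1) ^ card B * (-1) ^ card A"
proof -
  have "card A \<le> card B" using assms by (rule card_mono)
  moreover have "card (B - A) = card B - card A"
    using assms by (meson card_Diff_subset finite_subset)
  ultimately have "(-1::'a) ^ card (B - A) = (-1) ^ (card B + card A)"
    by (simp add: neg_one_power_add_eq_neg_one_power_diff)
  then show ?thesis by (simp add: power_add)
qed

lemma alternating_sum_interval_above:
  assumes "finite B" "A \<subseteq> B"
  shows "(\<Sum>T | A \<subseteq> T \<and> T \<subseteq> B. (-1::'a::comm_ring_1) ^ card (T - A)) = (if A = B then 1 else 0)"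
proof -
  have "(-1::'a) ^ card (T - A) = (-1) ^ card T * (-1) ^ card A" if "A \<subseteq> T" "T \<subseteq> B" for T
    using that assms(1) by (intro neg_one_power_card_diff) (auto intro: finite_subset)
  then have "(\<Sum>T | A \<subseteq> T \<and> T \<subseteq> B. (-1::'a) ^ card (T - A))
      = (\<Sum>T | A \<subseteq> T \<and> T \<subseteq> B. (-1) ^ card T) * (-1) ^ card A"
    by (simp add: sum_distrib_right)
  also have "\<dots> = (if A = B then (-1) ^ card A else 0) * (-1) ^ card A"
    by (simp only: alternating_sum_interval[OF assms])
  finally show ?thesis by simp
qed

lemma alternating_sum_interval_below:
  assumes "finite B" "A \<subseteq> B"
  shows "(\<Sum>T | A \<subseteq> T \<and> T \<subseteq> B. (-1::'a::comm_ring_1) ^ card (B - T)) = (if A = B then 1 else 0)"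
proof -
  have "(-1::'a) ^ card (B - T) = (-1) ^ card B * (-1) ^ card T" if "T \<subseteq> B" for T
    by (rule neg_one_power_card_diff[OF assms(1) that])
  then have "(\<Sum>T | A \<subseteq> T \<and> T \<subseteq> B. (-1::'a) ^ card (B - T))
      = (-1) ^ card B * (\<Sum>T | A \<subseteq> T \<and> T \<subseteq> B. (-1) ^ card T)"
    by (simp add: sum_distrib_left)
  also have "\<dots> = (-1) ^ card B * (if A = B then (-1) ^ card A else 0)"
    by (simp only: alternating_sum_interval[OF assms])
  finally show ?thesis by simp
qed

(* Transported to forests ordered by inclusion of edge sets (the order opposite to
   the paper's order on ordered forests). *)
lemma forest_interval_sign_sum_below:
  assumes "ordered_forest n h"
  shows "(\<Sum>q | ordered_forest n q \<and> forest_edges p \<subseteq> forest_edges q \<and> forest_edges q \<subseteq> forest_edges h.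
            (-1::'a::comm_ring_1) ^ card (forest_edges h - forest_edges q)) = (if p = h then 1 else 0)"
proof (cases "forest_edges p \<subseteq> forest_edges h")
  case True
  then show ?thesis
    using assms sum_forest_interval[OF assms, where f = "\<lambda>T. (-1::'a) ^ card (forest_edges h - T)"]
      alternating_sum_interval_below[OF finite_forest_edges[OF assms] True] forest_edges_inj
    by auto
next
  case False
  then have "p \<noteq> h" by auto
  with False show ?thesis
    by (auto intro: sum.neutral)
qed

lemma forest_interval_sign_sum_above:
  assumes "ordered_forest n h"
  shows "(\<Sum>q | ordered_forest n q \<and> forest_edges p \<subseteq> forest_edges q \<and> forest_edges q \<subseteq> forest_edges h.
            (-1::'a::comm_ring_1) ^ card (forest_edges q - forest_edges p)) = (if p = h then 1 else 0)"
proof (cases "forest_edges p \<subseteq> forest_edges h")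
  case True
  then show ?thesis
    using assms sum_forest_interval[OF assms, where f = "\<lambda>T. (-1::'a) ^ card (T - forest_edges p)"]
      alternating_sum_interval_above[OF finite_forest_edges[OF assms] True] forest_edges_inj
    by auto
next
  case False
  then have "p \<noteq> h" by auto
  with False show ?thesis
    by (auto intro: sum.neutral)
qed

lemma fspan_iff: "f \<in> fspan B \<longleftrightarrow> (\<exists>t r. f = (\<lambda>x. \<Sum>g\<in>t. r g * g x) \<and> finite t \<and> t \<subseteq> B)"
  by (simp add: fspan_def)

lemma fspan_base: "g \<in> B \<Longrightarrow> g \<in> fspan B"
  unfolding fspan_iff by (intro exI[of _ "{g}"] exI[of _ "\<lambda>_. 1"]) simp

lemma fspan_zero: "(\<lambda>x. 0) \<in> fspan B"
  unfolding fspan_iff by (intro exI[of _ "{}"]) simp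

lemma fspan_add:
  assumes "f \<in> fspan B" "h \<in> fspan B"
  shows "(\<lambda>x. f x + h x) \<in> fspan B"
proof -
  obtain t1 r1 where f: "f = (\<lambda>x. \<Sum>g\<in>t1. r1 g * g x)" "finite t1" "t1 \<subseteq> B"
    using assms(1) by (auto simp: fspan_iff)
  obtain t2 r2 where h: "h = (\<lambda>x. \<Sum>g\<in>t2. r2 g * g x)" "finite t2" "t2 \<subseteq> B"
    using assms(2) by (auto simp: fspan_iff)
  have extend: "(\<Sum>g\<in>t. r g * g x) = (\<Sum>g\<in>t1 \<union> t2. (if g \<in> t then r g else 0) * g x)"
    if "t \<subseteq> t1 \<union> t2" for t r x
    using that f h by (intro sum.mono_neutral_cong_left) auto
  define r where "r g = (if g \<in> t1 then r1 g else 0) + (if g \<in> t2 then r2 g else 0)" for g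
  have "(\<lambda>x. f x + h x) = (\<lambda>x. \<Sum>g\<in>t1 \<union> t2. r g * g x)"
    by (simp add: f h extend[of t1] extend[of t2] r_def distrib_right sum.distrib)
  then show ?thesis
    unfolding fspan_iff using f h by blast
qed

lemma fspan_scale:
  assumes "f \<in> fspan B"
  shows "(\<lambda>x. c * f x) \<in> fspan B"
proof -
  obtain t r where f: "f = (\<lambda>x. \<Sum>g\<in>t. r g * g x)" "finite t" "t \<subseteq> B"
    using assms by (auto simp: fspan_iff)
  have "(\<lambda>x. c * f x) = (\<lambda>x. \<Sum>g\<in>t. (c * r g) * g x)"
    by (simp add: f sum_distrib_left mult.assoc)
  then show ?thesis
    unfolding fspan_iff using f by (intro exI[of _ t] exI[of _ "\<lambda>g. c * r g"]) simp
qed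

lemma fspan_sum:
  assumes "finite Q" "\<And>i. i \<in> Q \<Longrightarrow> h i \<in> fspan B"
  shows "(\<lambda>x. \<Sum>i\<in>Q. c i * h i x) \<in> fspan B"
  using assms
proof (induction Q rule: finite_induct)
  case (insert i Q)
  then have "(\<lambda>x. c i * h i x + (\<Sum>i\<in>Q. c i * h i x)) \<in> fspan B"
    by (intro fspan_add fspan_scale) auto
  then show ?case
    using insert by simp
qed (simp add: fspan_zero)

lemma fspan_subset:
  assumes "B \<subseteq> fspan C"
  shows "fspan B \<subseteq> fspan C"
proof
  fix f assume "f \<in> fspan B"
  then obtain t r where f: "f = (\<lambda>x. \<Sum>g\<in>t. r g * g x)" "finite t" "t \<subseteq> B"
    by (auto simp: fspan_iff)
  have "(\<lambda>x. \<Sum>g\<in>t. r g * g x) \<in> fspan C"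
    using f(2,3) assms by (intro fspan_sum) auto
  then show "f \<in> fspan C"
    using f(1) by simp
qed

(* Moebius inversion of the defining relation of R: S_F is the sum of the R_G over all
   forests G with more edges than F. *)
lemma S_as_sum_of_R:
  assumes p: "ordered_forest n p"
  shows "(S_series n p w :: 'k::comm_ring_1) = (\<Sum>q | ordered_forest n q \<and> forest_edges p \<subseteq> forest_edges q. R_series n q w)"
proof -
  let ?F = "{q. ordered_forest n q}" and ?E = forest_edges
  have fin: "finite ?F"
    using finite_ordered_forests[of n "\<lambda>_. True"] by simp
  have "(\<Sum>q | ordered_forest n q \<and> ?E p \<subseteq> ?E q. R_series n q w)
      = (\<Sum>q\<in>{q \<in> ?F. ?E p \<subseteq> ?E q}. \<Sum>h\<in>{h \<in> ?F. ?E q \<subseteq> ?E h}. (-1) ^ card (?E h - ?E q) * S_series n h w :: 'k)"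
    by (simp add: R_series_def)
  also have "\<dots> = (\<Sum>h\<in>?F. \<Sum>q\<in>{q \<in> {q \<in> ?F. ?E p \<subseteq> ?E q}. ?E q \<subseteq> ?E h}. (-1) ^ card (?E h - ?E q) * S_series n h w)"
    by (rule sum.swap_restrict) (simp_all add: fin finite_ordered_forests)
  also have "\<dots> = (\<Sum>h\<in>?F. (\<Sum>q | ordered_forest n q \<and> ?E p \<subseteq> ?E q \<and> ?E q \<subseteq> ?E h. (-1) ^ card (?E h - ?E q)) * S_series n h w)"
    by (simp add: sum_distrib_right)
  also have "\<dots> = (\<Sum>h\<in>?F. if p = h then S_series n h w else 0)"
    by (intro sum.cong) (simp_all add: forest_interval_sign_sum_below)
  also have "\<dots> = S_series n p w"
    using p fin by simp
  finally show ?thesis ..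
qed

lemma finite_words_of_mset: "finite {w. mset w = m}"
proof -
  obtain xs where "mset xs = m" using ex_mset by blast
  then show ?thesis using mset_eq_finite[of xs] by simp
qed

lemma phi_linear:
  assumes "finite Q"
  shows "phi (\<lambda>w. \<Sum>q\<in>Q. c q * X q w) m = (\<Sum>q\<in>Q. c q * phi (X q) m)"
  unfolding phi_def
  by (simp add: sum_distrib_left sum.swap[of _ Q] assms finite_words_of_mset)

(* Part two: the commutative images of the R_F span the same space as those of the S_F,
   since each family is a triangular integer combination of the other. *)
lemma span_R_eq_span_S:
  "fspan ({phi (R_series n p) | n p. ordered_forest n p} :: ((nat \<times> nat) multiset \<Rightarrow> 'k::comm_ring_1) set)
     = fspan {phi (S_series n p) | n p. ordered_forest n p}"
    (is "fspan ?R = fspan ?S")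
proof
  show "fspan ?R \<subseteq> fspan ?S"
  proof (intro fspan_subset subsetI)
    fix f assume "f \<in> ?R"
    then obtain n p where f: "f = phi (R_series n p)" by auto
    let ?Q = "{q. ordered_forest n q \<and> forest_edges p \<subseteq> forest_edges q}"
    have "f = (\<lambda>m. \<Sum>q\<in>?Q. (-1) ^ card (forest_edges q - forest_edges p) * phi (S_series n q) m)"
      unfolding f R_series_def by (intro ext phi_linear finite_ordered_forests)
    also have "\<dots> \<in> fspan ?S"
      by (intro fspan_sum finite_ordered_forests fspan_base) auto
    finally show "f \<in> fspan ?S" .
  qed
  show "fspan ?S \<subseteq> fspan ?R"
  proof (intro fspan_subset subsetI)
    fix f assume "f \<in> ?S"
    then obtain n p where f: "f = phi (S_series n p)" and p: "ordered_forest n p" by auto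
    let ?Q = "{q. ordered_forest n q \<and> forest_edges p \<subseteq> forest_edges q}"
    have S: "S_series n p = (\<lambda>w. \<Sum>q\<in>?Q. 1 * R_series n q w)"
      by (intro ext) (simp add: S_as_sum_of_R[OF p])
    have "f = (\<lambda>m. \<Sum>q\<in>?Q. 1 * phi (R_series n q) m)"
      unfolding f S by (intro ext phi_linear finite_ordered_forests)
    also have "\<dots> \<in> fspan ?R"
      by (intro fspan_sum finite_ordered_forests fspan_base) auto
    finally show "f \<in> fspan ?R" .
  qed
qed

definition relabel :: "(nat \<Rightarrow> nat) \<Rightarrow> (nat \<Rightarrow> nat option) \<Rightarrow> nat \<Rightarrow> nat option" where
  "relabel \<sigma> q v = map_option \<sigma> (q (inv \<sigma> v))"

lemma relabel_apply:
  assumes "\<sigma> permutes S"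
  shows "relabel \<sigma> q (\<sigma> v) = map_option \<sigma> (q v)"
  by (simp add: relabel_def permutes_inverses[OF assms])

lemma relabel_eq_Some:
  assumes "\<sigma> permutes S"
  shows "relabel \<sigma> q a = Some b \<longleftrightarrow> q (inv \<sigma> a) = Some (inv \<sigma> b)"
  using permutes_inverses[OF assms] by (cases "q (inv \<sigma> a)") (auto simp: relabel_def)

lemma relabel_inverse:
  assumes "\<sigma> permutes S"
  shows "relabel (inv \<sigma>) (relabel \<sigma> q) = q"
proof
  fix v
  show "relabel (inv \<sigma>) (relabel \<sigma> q) v = q v"
    using permutes_inverses[OF assms]
    by (cases "q v") (simp_all add: relabel_def permutes_inv_inv[OF assms])
qed

lemma relabel_edges_all:
  assumes "\<sigma> permutes S"
  shows "(\<forall>a b. relabel \<sigma> q a = Some b \<longrightarrow> P a b) \<longleftrightarrow> (\<forall>l k. q l = Some k \<longrightarrow> P (\<sigma> l) (\<sigma> k))"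
  using permutes_inverses[OF assms] by (metis relabel_eq_Some[OF assms])

lemma forest_edges_relabel:
  assumes "\<sigma> permutes S"
  shows "forest_edges (relabel \<sigma> q) = map_prod \<sigma> \<sigma> ` forest_edges q"
proof (intro set_eqI iffI)
  fix e assume "e \<in> forest_edges (relabel \<sigma> q)"
  then obtain a b where "e = (a, b)" "q (inv \<sigma> a) = Some (inv \<sigma> b)"
    by (auto simp: relabel_eq_Some[OF assms] forest_edges_def)
  then show "e \<in> map_prod \<sigma> \<sigma> ` forest_edges q"
    using permutes_inverses[OF assms] by (metis forest_edges_iff map_prod_simp rev_image_eqI)
next
  fix e assume "e \<in> map_prod \<sigma> \<sigma> ` forest_edges q"
  then show "e \<in> forest_edges (relabel \<sigma> q)"
    by (auto simp: relabel_apply[OF assms])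
qed

(* Relabelling preserves being a forest on [n]; acyclicity is transported via well-foundedness. *)
lemma ordered_forest_relabel:
  assumes \<sigma>: "\<sigma> permutes {1..n}" and q: "ordered_forest n q"
  shows "ordered_forest n (relabel \<sigma> q)"
proof -
  have "forest_edges (relabel \<sigma> q) = inv_image (forest_edges q) (inv \<sigma>)"
    by (auto simp: inv_image_def relabel_eq_Some[OF \<sigma>])
  moreover have "wf (forest_edges q)"
    using q finite_forest_edges by (auto simp: ordered_forest_def intro: finite_acyclic_wf)
  ultimately have "acyclic (forest_edges (relabel \<sigma> q))"
    by (simp add: wf_acyclic)
  moreover have "l \<in> {1..n} \<and> k \<in> {1..n}" if "relabel \<sigma> q l = Some k" for l k
  proof -
    have "(l, k) \<in> map_prod \<sigma> \<sigma> ` forest_edges q"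
      using that forest_edges_relabel[OF \<sigma>, of q] by (metis forest_edges_iff)
    then obtain x y where xy: "q x = Some y" "l = \<sigma> x" "k = \<sigma> y"
      by auto
    moreover have "x \<in> {1..n}" "y \<in> {1..n}"
      using q xy(1) by (auto simp: ordered_forest_def)
    ultimately show ?thesis
      using permutes_in_image[OF \<sigma>] by simp
  qed
  ultimately show ?thesis
    by (auto simp: ordered_forest_def)
qed

lemma card_relabel_edges_diff:
  assumes "\<sigma> permutes S"
  shows "card (forest_edges (relabel \<sigma> h) - forest_edges (relabel \<sigma> q)) = card (forest_edges h - forest_edges q)"
proof -
  have inj: "inj (map_prod \<sigma> \<sigma>)"
    using map_prod_inj_on[OF permutes_inj[OF assms] permutes_inj[OF assms]] by simp
  then show ?thesis
    by (simp add: forest_edges_relabel[OF assms] image_set_diff[symmetric] card_image inj_on_subset)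
qed

lemma same_underlying_relabel:
  assumes "\<sigma> permutes {1..n}"
  shows "same_underlying n q (relabel \<sigma> q)"
  unfolding same_underlying_def
  using assms by (intro exI[of _ \<sigma>]) (simp add: permutes_imp_bij relabel_apply)

lemma same_underlying_imp_relabel:
  assumes p: "ordered_forest n p" and p': "ordered_forest n p'" and same: "same_underlying n p p'"
  shows "\<exists>\<sigma>. \<sigma> permutes {1..n} \<and> p' = relabel \<sigma> p"
proof -
  obtain \<sigma>0 where bij: "bij_betw \<sigma>0 {1..n} {1..n}" and hom: "\<forall>l\<in>{1..n}. p' (\<sigma>0 l) = map_option \<sigma>0 (p l)"
    using same by (auto simp: same_underlying_def)
  define \<sigma> where "\<sigma> v = (if v \<in> {1..n} then \<sigma>0 v else v)" for v
  have "bij_betw \<sigma> {1..n} {1..n}"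
    using bij bij_betw_cong[of "{1..n}" \<sigma> \<sigma>0] by (simp add: \<sigma>_def)
  then have \<sigma>: "\<sigma> permutes {1..n}"
    by (rule bij_imp_permutes) (auto simp: \<sigma>_def)
  have "p' (\<sigma> l) = relabel \<sigma> p (\<sigma> l)" for l
  proof (cases "l \<in> {1..n}")
    case True
    then have "p' (\<sigma> l) = map_option \<sigma>0 (p l)"
      using hom by (simp add: \<sigma>_def)
    also have "\<dots> = map_option \<sigma> (p l)"
      using p by (cases "p l") (auto simp: \<sigma>_def ordered_forest_def)
    also have "\<dots> = relabel \<sigma> p (\<sigma> l)"
      by (simp add: relabel_apply[OF \<sigma>])
    finally show ?thesis .
  next
    case False
    then have "p' l = None" "p l = None"
      using p p' by (simp_all add: ordered_forest_outside)
    moreover have "\<sigma> l = l"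
      using permutes_not_in[OF \<sigma> False] .
    ultimately show ?thesis
      using relabel_apply[OF \<sigma>, of p l] by simp
  qed
  then have "p' = relabel \<sigma> p"
    using permutes_inverses(1)[OF \<sigma>] by (metis ext)
  with \<sigma> show ?thesis by blast
qed

lemma set_conv_positions:
  assumes "length w = n"
  shows "set w = (\<lambda>j. w ! (j - 1)) ` {1..n}"
proof -
  have "set w = (\<lambda>i. w ! i) ` {..<n}"
    using assms by (auto simp: in_set_conv_nth image_iff)
  also have "\<dots> = (\<lambda>j. w ! (j - 1)) ` (Suc ` {..<n})"
    by (simp add: image_image)
  also have "\<dots> = (\<lambda>j. w ! (j - 1)) ` {1..n}"
    by (simp only: image_Suc_lessThan)
  finally show ?thesis .
qed

lemma S_relabel:
  assumes \<tau>: "\<tau> permutes {1..n}" and len: "length w' = n" "length w = n"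
    and pos: "\<forall>j\<in>{1..n}. w' ! (j - 1) = w ! (\<tau> j - 1)"
    and q: "ordered_forest n q"
  shows "S_series n q w' = S_series n (relabel \<tau> q) w"
proof -
  have "set w' = (\<lambda>j. w ! (\<tau> j - 1)) ` {1..n}"
    unfolding set_conv_positions[OF len(1)] using pos by (intro image_cong) auto
  also have "\<dots> = (\<lambda>j. w ! (j - 1)) ` (\<tau> ` {1..n})"
    by (simp add: image_image)
  also have "\<dots> = set w"
    unfolding permutes_image[OF \<tau>] set_conv_positions[OF len(2)] ..
  finally have "set w' = set w" .
  moreover have "(\<forall>l k. q l = Some k \<longrightarrow> letter_prec (w' ! (k - 1)) (w' ! (l - 1)))
      \<longleftrightarrow> (\<forall>l k. q l = Some k \<longrightarrow> letter_prec (w ! (\<tau> k - 1)) (w ! (\<tau> l - 1)))"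
    using q pos by (auto simp: ordered_forest_def)
  ultimately show ?thesis
    using len by (simp add: S_series_def relabel_edges_all[OF \<tau>])
qed

(* Consequently the series R is invariant under the same simultaneous relabelling, because
   relabelling is an isomorphism of the poset of forests above q. *)
lemma R_relabel:
  assumes \<tau>: "\<tau> permutes {1..n}" and len: "length w' = n" "length w = n"
    and pos: "\<forall>j\<in>{1..n}. w' ! (j - 1) = w ! (\<tau> j - 1)"
    and q: "ordered_forest n q"
  shows "R_series n q w' = (R_series n (relabel \<tau> q) w :: 'k::comm_ring_1)"
  unfolding R_series_def
proof (rule sum.reindex_bij_witness[where j = "relabel \<tau>" and i = "relabel (inv \<tau>)"])
  fix h assume h: "h \<in> {h. ordered_forest n h \<and> forest_edges q \<subseteq> forest_edges h}"
  show "relabel (inv \<tau>) (relabel \<tau> h) = h"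
    by (rule relabel_inverse[OF \<tau>])
  have "forest_edges (relabel \<tau> q) \<subseteq> forest_edges (relabel \<tau> h)"
    using h by (simp add: forest_edges_relabel[OF \<tau>] image_mono)
  then show "relabel \<tau> h \<in> {h'. ordered_forest n h' \<and> forest_edges (relabel \<tau> q) \<subseteq> forest_edges h'}"
    using h ordered_forest_relabel[OF \<tau>] by simp
  show "(-1) ^ card (forest_edges (relabel \<tau> h) - forest_edges (relabel \<tau> q)) * S_series n (relabel \<tau> h) w
      = (-1) ^ card (forest_edges h - forest_edges q) * (S_series n h w' :: 'k)"
    using h by (simp add: card_relabel_edges_diff[OF \<tau>] S_relabel[OF \<tau> len pos])
next
  have \<tau>': "inv \<tau> permutes {1..n}" by (rule permutes_inv[OF \<tau>])
  fix h' assume h': "h' \<in> {h'. ordered_forest n h' \<and> forest_edges (relabel \<tau> q) \<subseteq> forest_edges h'}"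
  show "relabel \<tau> (relabel (inv \<tau>) h') = h'"
    using relabel_inverse[OF \<tau>'] permutes_inv_inv[OF \<tau>] by metis
  have "forest_edges (relabel (inv \<tau>) (relabel \<tau> q)) \<subseteq> forest_edges (relabel (inv \<tau>) h')"
    using h' by (simp add: forest_edges_relabel[OF \<tau>'] image_mono)
  then show "relabel (inv \<tau>) h' \<in> {h. ordered_forest n h \<and> forest_edges q \<subseteq> forest_edges h}"
    using h' ordered_forest_relabel[OF \<tau>'] by (simp add: relabel_inverse[OF \<tau>])
qed

lemma bij_betw_Suc_lessThan: "bij_betw Suc {..<n} {1..n}"
  by (simp add: bij_betw_def image_Suc_lessThan)

lemma vertex_permutation_permutes:
  assumes "\<pi> permutes {..<n}"
  shows "map_permutation {..<n} Suc \<pi> permutes {1..n}"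
  by (rule map_permutation_permutes[OF bij_betw_Suc_lessThan assms])

lemma permute_list_positions:
  assumes \<pi>: "\<pi> permutes {..<n}" and len: "length w = n"
  shows "\<forall>j\<in>{1..n}. permute_list \<pi> w ! (j - 1) = w ! (map_permutation {..<n} Suc \<pi> j - 1)"
proof
  fix j assume "j \<in> {1..n}"
  then obtain i where i: "j = Suc i" "i < n"
    by (cases j) auto
  have "map_permutation {..<n} Suc \<pi> (Suc i) = Suc (\<pi> i)"
    using i by (simp add: map_permutation_apply)
  then show "permute_list \<pi> w ! (j - 1) = w ! (map_permutation {..<n} Suc \<pi> j - 1)"
    using i \<pi> len by (simp add: permute_list_nth)
qed

lemma vertex_permutation_surj:
  assumes "\<sigma> permutes {1..n}"
  shows "\<exists>\<pi>. \<pi> permutes {..<n} \<and> map_permutation {..<n} Suc \<pi> = \<sigma>"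
proof -
  have bij: "bij_betw (\<lambda>v. v - 1) {1..n} {..<n}"
    by (intro bij_betw_byWitness[where f' = Suc]) auto
  show ?thesis
  proof (intro exI conjI)
    show "map_permutation {1..n} (\<lambda>v. v - 1) \<sigma> permutes {..<n}"
      by (rule map_permutation_permutes[OF bij assms])
    show "map_permutation {..<n} Suc (map_permutation {1..n} (\<lambda>v. v - 1) \<sigma>) = \<sigma>"
      by (rule map_permutation_compose_inv[OF bij assms]) auto
  qed
qed

lemma phi_permute_positions:
  assumes \<pi>: "\<pi> permutes {..<size m}"
  shows "phi (\<lambda>w. X (permute_list \<pi> w)) m = phi X m"
  unfolding phi_def
proof (rule sum.reindex_bij_witness[where j = "permute_list \<pi>" and i = "permute_list (inv \<pi>)"])
  have \<pi>': "inv \<pi> permutes {..<size m}" by (rule permutes_inv[OF \<pi>])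
  fix w assume "w \<in> {w. mset w = m}"
  then have len: "length w = size m" by auto
  show "permute_list (inv \<pi>) (permute_list \<pi> w) = w"
    using \<pi>' len by (simp flip: permute_list_compose add: permutes_inv_o[OF \<pi>])
  show "permute_list \<pi> w \<in> {w. mset w = m}"
    using \<open>w \<in> _\<close> \<pi> len by simp
  show "permute_list \<pi> (permute_list (inv \<pi>) w) = w"
    using \<pi> len by (simp flip: permute_list_compose add: permutes_inv_o[OF \<pi>])
  show "permute_list (inv \<pi>) w \<in> {w. mset w = m}"
    using \<open>w \<in> _\<close> \<pi>' len by simp
qed simp

lemma R_wrong_length:
  assumes "length w \<noteq> n"
  shows "R_series n p w = 0"
  using assms by (simp add: R_series_def S_series_def)

lemma phi_R_wrong_size:
  assumes "size m \<noteq> n"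
  shows "phi (R_series n p) m = 0"
proof -
  have "length w \<noteq> n" if "mset w = m" for w
    using assms that by auto
  then show ?thesis
    by (simp add: phi_def R_wrong_length)
qed

theorem phi_R_same_underlying:
  assumes p: "ordered_forest n p" and p': "ordered_forest n p'" and same: "same_underlying n p p'"
  shows "phi (R_series n p) = (phi (R_series n p') :: (nat \<times> nat) multiset \<Rightarrow> 'k::comm_ring_1)"
proof
  fix m :: "(nat \<times> nat) multiset"
  obtain \<sigma> where \<sigma>: "\<sigma> permutes {1..n}" and p'_def: "p' = relabel \<sigma> p"
    using same_underlying_imp_relabel[OF p p' same] by blast
  obtain \<pi> where \<pi>: "\<pi> permutes {..<n}" and \<sigma>_def: "map_permutation {..<n} Suc \<pi> = \<sigma>"
    using vertex_permutation_surj[OF \<sigma>] by blast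
  show "phi (R_series n p) m = (phi (R_series n p') m :: 'k)"
  proof (cases "size m = n")
    case True
    have "R_series n p (permute_list \<pi> w) = (R_series n p' w :: 'k)" if "mset w = m" for w
    proof -
      have len: "length w = n" and len': "length (permute_list \<pi> w) = n"
        using that True by auto
      have "\<forall>j\<in>{1..n}. permute_list \<pi> w ! (j - 1) = w ! (\<sigma> j - 1)"
        using permute_list_positions[OF \<pi> len] \<sigma>_def by simp
      then show ?thesis
        unfolding p'_def by (rule R_relabel[OF \<sigma> len' len _ p])
    qed
    then have "phi (\<lambda>w. R_series n p (permute_list \<pi> w)) m = (phi (R_series n p') m :: 'k)"
      by (simp add: phi_def)
    moreover have "phi (\<lambda>w. R_series n p (permute_list \<pi> w)) m = (phi (R_series n p) m :: 'k)"
      using \<pi> True by (intro phi_permute_positions) simp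
    ultimately show ?thesis
      by simp
  next
    case False
    then show ?thesis
      by (simp add: phi_R_wrong_size)
  qed
qed

(* Vertex v receives the code v + n * depth(v);
   codes are injective on [n] and strictly increase from parent to child.  The letter of v
   is (code of its parent or 0, code of v), so two letters are composable exactly along an edge. *)
definition ancestors :: "(nat \<Rightarrow> nat option) \<Rightarrow> nat \<Rightarrow> nat set" where
  "ancestors p v = {k. (v, k) \<in> (forest_edges p)\<^sup>+}"

definition vertex_code :: "nat \<Rightarrow> (nat \<Rightarrow> nat option) \<Rightarrow> nat \<Rightarrow> nat" where
  "vertex_code n p v = v + n * card (ancestors p v)"

definition vertex_letter :: "nat \<Rightarrow> (nat \<Rightarrow> nat option) \<Rightarrow> nat \<Rightarrow> nat \<times> nat" where
  "vertex_letter n p v = ((case p v of None \<Rightarrow> 0 | Some k \<Rightarrow> vertex_code n p k), vertex_code n p v)"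

definition canonical_word :: "nat \<Rightarrow> (nat \<Rightarrow> nat option) \<Rightarrow> (nat \<times> nat) list" where
  "canonical_word n p = map (\<lambda>i. vertex_letter n p (Suc i)) [0..<n]"

lemma ancestors_subset:
  assumes "ordered_forest n p"
  shows "ancestors p v \<subseteq> {1..n}"
proof
  fix k assume "k \<in> ancestors p v"
  then have "(v, k) \<in> (forest_edges p)\<^sup>+" by (simp add: ancestors_def)
  then obtain l where "p l = Some k" by (induction rule: trancl_induct) auto
  then show "k \<in> {1..n}"
    using assms by (auto simp: ordered_forest_def)
qed

lemma card_ancestors_parent:
  assumes p: "ordered_forest n p" and lk: "p l = Some k"
  shows "card (ancestors p k) < card (ancestors p l)"
proof -
  have fin: "finite (ancestors p v)" for v
    using ancestors_subset[OF p] finite_subset by blast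
  have "k \<notin> ancestors p k"
    using p by (auto simp: ancestors_def ordered_forest_def acyclic_def)
  then have "Suc (card (ancestors p k)) = card (insert k (ancestors p k))"
    using fin by simp
  also have "\<dots> \<le> card (ancestors p l)"
    using lk fin by (intro card_mono) (auto simp: ancestors_def intro: trancl_into_trancl2)
  finally show ?thesis by simp
qed

lemma vertex_code_parent_less:
  assumes p: "ordered_forest n p" and lk: "p l = Some k"
  shows "vertex_code n p k < vertex_code n p l"
proof -
  have "n * card (ancestors p k) + n \<le> n * card (ancestors p l)"
    using card_ancestors_parent[OF p lk] by (metis Suc_leI add.commute mult_Suc_right mult_le_mono2)
  moreover have "1 \<le> l" "k \<le> n"
    using lk p by (auto simp: ordered_forest_def)
  ultimately show ?thesis
    by (simp add: vertex_code_def)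
qed

(* On the vertex set, the vertex is recovered from its code modulo n. *)
lemma vertex_code_inj:
  assumes "a \<in> {1..n}" "b \<in> {1..n}" "vertex_code n p a = vertex_code n p b"
  shows "a = b"
proof -
  have decode: "(vertex_code n p v - 1) mod n = v - 1" if "v \<in> {1..n}" for v
  proof -
    have "vertex_code n p v - 1 = (v - 1) + n * card (ancestors p v)"
      using that by (simp add: vertex_code_def)
    moreover have "v - 1 < n"
      using that by auto
    ultimately show ?thesis
      by (simp only: mod_mult_self2 mod_less)
  qed
  have "a - 1 = b - 1"
    using decode[OF assms(1)] decode[OF assms(2)] assms(3) by simp
  then show ?thesis
    using assms(1,2) by auto
qed

lemma vertex_letter_valid:
  assumes "ordered_forest n p" "v \<in> {1..n}"
  shows "fst (vertex_letter n p v) < snd (vertex_letter n p v)"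
  using assms vertex_code_parent_less[OF assms(1)]
  by (cases "p v") (auto simp: vertex_letter_def vertex_code_def)

lemma vertex_letter_prec:
  assumes p: "ordered_forest n p" and ab: "a \<in> {1..n}" "b \<in> {1..n}"
  shows "letter_prec (vertex_letter n p b) (vertex_letter n p a) \<longleftrightarrow> p a = Some b"
proof (cases "p a")
  case None
  then show ?thesis
    using ab by (auto simp: vertex_letter_def vertex_code_def letter_prec_def)
next
  case (Some k)
  then have "k \<in> {1..n}"
    using p by (auto simp: ordered_forest_def)
  then show ?thesis
    using Some ab vertex_code_inj[of b n k p] by (auto simp: vertex_letter_def letter_prec_def)
qed

lemma length_canonical_word [simp]: "length (canonical_word n p) = n"
  by (simp add: canonical_word_def)

lemma canonical_word_nth:
  assumes "j \<in> {1..n}"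
  shows "canonical_word n p ! (j - 1) = vertex_letter n p j"
  using assms by (auto simp: canonical_word_def)

lemma S_canonical_word:
  assumes p: "ordered_forest n p" and h: "ordered_forest n h"
  shows "S_series n h (canonical_word n p) = (if forest_edges h \<subseteq> forest_edges p then 1 else 0)"
proof -
  let ?w = "canonical_word n p"
  have "set ?w = vertex_letter n p ` {1..n}"
    unfolding set_conv_positions[OF length_canonical_word] by (intro image_cong refl canonical_word_nth)
  then have valid: "\<forall>a\<in>set ?w. fst a < snd a"
    using vertex_letter_valid[OF p] by auto
  have "letter_prec (?w ! (k - 1)) (?w ! (l - 1)) \<longleftrightarrow> p l = Some k" if "h l = Some k" for l k
  proof -
    have lk: "l \<in> {1..n}" "k \<in> {1..n}"
      using h that by (auto simp: ordered_forest_def)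
    show ?thesis
      using canonical_word_nth[OF lk(1)] canonical_word_nth[OF lk(2)] vertex_letter_prec[OF p lk]
      by simp
  qed
  then have "(\<forall>l k. h l = Some k \<longrightarrow> letter_prec (?w ! (k - 1)) (?w ! (l - 1)))
      \<longleftrightarrow> (\<forall>l k. h l = Some k \<longrightarrow> p l = Some k)"
    by blast
  then show ?thesis
    using valid by (auto simp: S_series_def forest_edges_def)
qed

lemma R_canonical_word:
  assumes p: "ordered_forest n p" and G: "ordered_forest n G"
  shows "R_series n G (canonical_word n p) = (if G = p then 1 else (0::'k::comm_ring_1))"
proof -
  let ?E = forest_edges
  have "R_series n G (canonical_word n p)
      = (\<Sum>h | ordered_forest n h \<and> ?E G \<subseteq> ?E h. if ?E h \<subseteq> ?E p then (-1) ^ card (?E h - ?E G) else 0 :: 'k)"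
    unfolding R_series_def by (intro sum.cong) (auto simp: S_canonical_word[OF p])
  also have "\<dots> = (\<Sum>h | ordered_forest n h \<and> ?E G \<subseteq> ?E h \<and> ?E h \<subseteq> ?E p. (-1) ^ card (?E h - ?E G))"
    by (simp add: sum.inter_filter[OF finite_ordered_forests, symmetric])
  also have "\<dots> = (if G = p then 1 else 0)"
    by (rule forest_interval_sign_sum_above[OF p])
  finally show ?thesis .
qed

(* A rearrangement of the canonical word of p reads, in vertex order, as the canonical word
   relabelled by some tau; so R_G at it equals R of the relabelled G at the canonical word. *)
lemma R_rearranged_canonical_word:
  assumes p: "ordered_forest n p" and w: "mset w = mset (canonical_word n p)"
  obtains \<tau> where "\<tau> permutes {1..n}"
    and "\<And>G. ordered_forest n G \<Longrightarrow> R_series n G w = (if relabel \<tau> G = p then 1 else (0::'k::comm_ring_1))"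
proof -
  obtain \<pi> where \<pi>: "\<pi> permutes {..<n}" and w_def: "permute_list \<pi> (canonical_word n p) = w"
    using mset_eq_permutation[OF w] by auto
  let ?\<tau> = "map_permutation {..<n} Suc \<pi>"
  have \<tau>: "?\<tau> permutes {1..n}"
    by (rule vertex_permutation_permutes[OF \<pi>])
  have len: "length w = n"
    using w_def by auto
  have pos: "\<forall>j\<in>{1..n}. w ! (j - 1) = canonical_word n p ! (?\<tau> j - 1)"
    using permute_list_positions[OF \<pi> length_canonical_word[of n p]] w_def by simp
  have "R_series n G w = (if relabel ?\<tau> G = p then 1 else (0::'k))" if G: "ordered_forest n G" for G
  proof -
    have "R_series n G w = (R_series n (relabel ?\<tau> G) (canonical_word n p) :: 'k)"
      by (rule R_relabel[OF \<tau> len length_canonical_word pos G])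
    also have "\<dots> = (if relabel ?\<tau> G = p then 1 else 0)"
      by (rule R_canonical_word[OF p ordered_forest_relabel[OF \<tau> G]])
    finally show ?thesis .
  qed
  with \<tau> show ?thesis
    using that by blast
qed

lemma phi_R_canonical_off_diagonal:
  assumes p: "ordered_forest n p" and G: "ordered_forest n G" and not_same: "\<not> same_underlying n p G"
  shows "phi (R_series n G) (mset (canonical_word n p)) = (0::'k::comm_ring_1)"
  unfolding phi_def
proof (rule sum.neutral, rule ballI)
  fix w assume "w \<in> {w. mset w = mset (canonical_word n p)}"
  then obtain \<tau> where \<tau>: "\<tau> permutes {1..n}"
    and R: "R_series n G w = (if relabel \<tau> G = p then 1 else (0::'k))"
    using R_rearranged_canonical_word[OF p, of w] G by auto
  have "relabel \<tau> G \<noteq> p"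
  proof
    assume "relabel \<tau> G = p"
    then have "G = relabel (inv \<tau>) p"
      using relabel_inverse[OF \<tau>] by metis
    then show False
      using not_same same_underlying_relabel[OF permutes_inv[OF \<tau>]] by metis
  qed
  then show "R_series n G w = (0::'k)"
    using R by simp
qed

lemma sum_zero_one_nonzero:
  assumes "finite A" "\<forall>x\<in>A. f x = 0 \<or> f x = 1" "a \<in> A" "f a = 1"
  shows "sum f A \<noteq> (0::'a::semiring_char_0)"
proof -
  have "sum f A = (\<Sum>x\<in>A. if f x = 1 then 1 else 0)"
    using assms(2) by (intro sum.cong) auto
  also have "\<dots> = (\<Sum>x\<in>{x \<in> A. f x = 1}. 1)"
    by (rule sum.inter_filter[OF assms(1), symmetric])
  also have "\<dots> = of_nat (card {x \<in> A. f x = 1})"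
    by simp
  finally show ?thesis
    using assms by (auto simp: card_gt_0_iff)
qed

lemma phi_R_canonical_diagonal:
  assumes p: "ordered_forest n p"
  shows "phi (R_series n p) (mset (canonical_word n p)) \<noteq> (0::'k::{comm_ring_1, semiring_char_0})"
  unfolding phi_def
proof (rule sum_zero_one_nonzero[OF finite_words_of_mset])
  show "\<forall>w\<in>{w. mset w = mset (canonical_word n p)}. R_series n p w = (0::'k) \<or> R_series n p w = (1::'k)"
  proof
    fix w assume "w \<in> {w. mset w = mset (canonical_word n p)}"
    then obtain \<tau> where "R_series n p w = (if relabel \<tau> p = p then 1 else (0::'k))"
      using R_rearranged_canonical_word[OF p, of w] p by auto
    then show "R_series n p w = (0::'k) \<or> R_series n p w = (1::'k)"
      by simp
  qed
  show "R_series n p (canonical_word n p) = (1::'k)"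
    using R_canonical_word[OF p p] by simp
qed simp

(* Evaluating a vanishing combination at the canonical word of one forest
   isolates its coefficient. *)
theorem phi_R_linearly_independent:
  fixes I :: "(nat \<times> (nat \<Rightarrow> nat option)) set" and c :: "_ \<Rightarrow> 'k::{idom, ring_char_0}"
  assumes fin: "finite I" and forests: "\<forall>x\<in>I. ordered_forest (fst x) (snd x)"
    and distinct: "\<forall>x\<in>I. \<forall>y\<in>I. x \<noteq> y \<longrightarrow> \<not> (fst x = fst y \<and> same_underlying (fst x) (snd x) (snd y))"
    and zero: "\<forall>m. (\<Sum>x\<in>I. c x * phi (R_series (fst x) (snd x)) m) = 0"
  shows "\<forall>x\<in>I. c x = 0"
proof
  fix x assume x: "x \<in> I"
  obtain n p where x_def: "x = (n, p)" by (cases x)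
  have p: "ordered_forest n p"
    using forests x x_def by auto
  let ?m = "mset (canonical_word n p)"
  have others: "phi (R_series (fst y) (snd y)) ?m = (0::'k)" if y: "y \<in> I - {x}" for y
  proof (cases "fst y = n")
    case True
    then have "\<not> same_underlying n p (snd y)" "ordered_forest n (snd y)"
      using distinct forests x y x_def by auto
    then show ?thesis
      using True phi_R_canonical_off_diagonal[OF p] by simp
  next
    case False
    then show ?thesis
      by (intro phi_R_wrong_size) simp
  qed
  have "0 = (\<Sum>y\<in>I. c y * phi (R_series (fst y) (snd y)) ?m)"
    using zero by simp
  also have "\<dots> = c x * phi (R_series n p) ?m"
    using others x x_def by (simp add: sum.remove[OF fin x] sum.neutral)
  finally have "c x * phi (R_series n p) ?m = 0" ..
  moreover have "phi (R_series n p) ?m \<noteq> (0::'k)"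
    by (rule phi_R_canonical_diagonal[OF p])
  ultimately show "c x = 0"
    by simp
qed

theorem mainTheorem10:
  shows "(\<forall>n p p'. ordered_forest n p \<and> ordered_forest n p' \<and> same_underlying n p p' \<longrightarrow>
             phi (R_series n p) = (phi (R_series n p') :: (nat \<times> nat) multiset \<Rightarrow> 'k::field_char_0))
       \<and> fspan ({phi (R_series n p) | n p. ordered_forest n p} :: ((nat \<times> nat) multiset \<Rightarrow> 'k) set)
         = fspan {phi (S_series n p) | n p. ordered_forest n p}
       \<and> (\<forall>(I :: (nat \<times> (nat \<Rightarrow> nat option)) set) (c :: _ \<Rightarrow> 'k).
            finite I \<and> (\<forall>x\<in>I. ordered_forest (fst x) (snd x))
            \<and> (\<forall>x\<in>I. \<forall>y\<in>I. x \<noteq> y \<longrightarrow> \<not> (fst x = fst y \<and> same_underlying (fst x) (snd x) (snd y)))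
            \<and> (\<forall>m. (\<Sum>x\<in>I. c x * phi (R_series (fst x) (snd x)) m) = 0)
            \<longrightarrow> (\<forall>x\<in>I. c x = 0))"
proof (intro conjI allI impI)
  fix n p p' assume "ordered_forest n p \<and> ordered_forest n p' \<and> same_underlying n p p'"
  then show "phi (R_series n p) = (phi (R_series n p') :: (nat \<times> nat) multiset \<Rightarrow> 'k)"
    by (intro phi_R_same_underlying) auto
next
  fix I :: "(nat \<times> (nat \<Rightarrow> nat option)) set" and c :: "_ \<Rightarrow> 'k"
  assume "finite I \<and> (\<forall>x\<in>I. ordered_forest (fst x) (snd x))
    \<and> (\<forall>x\<in>I. \<forall>y\<in>I. x \<noteq> y \<longrightarrow> \<not> (fst x = fst y \<and> same_underlying (fst x) (snd x) (snd y)))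
    \<and> (\<forall>m. (\<Sum>x\<in>I. c x * phi (R_series (fst x) (snd x)) m) = 0)"
  then show "\<forall>x\<in>I. c x = 0"
    by (intro phi_R_linearly_independent) auto
qed (rule span_R_eq_span_S)

end
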